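(* Let $m\ge2$, $k\ge1$, $n\ge1$, $\mathcal{A}\in\mathbb{R}_+^{[m,n]}$ and $\mathcal{B}\in\mathbb{R}_+^{[k,n]}$ with $r_i(\mathcal{B})\neq0$ for all $i\in[n]$. Then \[\min_{i\in[n]}\frac{r_i(\mathcal{A}\mathcal{B})}{(r_i(\mathcal{B}))^{m-1}}\le\rho(\mathcal{A})\le\max_{i\in[n]}\frac{r_i(\mathcal{A}\mathcal{B})}{(r_i(\mathcal{B}))^{m-1}}.\]
   Context: $[n]=\{1,\ldots,n\}$. $\mathbb{C}^{[m,n]}$ (resp. $\mathbb{R}_+^{[m,n]}$) denotes the set of order $m$, dimension $n$ tensors $\mathcal{A}=(a_{i_1\cdots i_m})$, $i_j\in[n]$, with complex (resp. nonnegative real) entries; for $k=1$ these are vectors in $\mathbb{C}^n$ (resp. nonnegative vectors). For a tensor $\mathcal{T}=(t_{i_1\cdots i_p})$ of order $p$ and dimension $n$, $r_i(\mathcal{T})=\sum_{i_2,\ldots,i_p=1}^n|t_{ii_2\cdots i_p}|$ (for $p=1$, $r_i(\mathcal{T})=|t_i|$). General product: for $\mathcal{A}\in\mathbb{C}^{[m,n]}$ ($m\ge2$), $\mathcal{B}\in\mathbb{C}^{[k,n]}$ ($k\ge1$), $\mathcal{A}\mathcal{B}=(c_{i\alpha_1\cdots\alpha_{m-1}})$ is the order $(m-1)(k-1)+1$, dimension $n$ tensor with $c_{i\alpha_1\cdots\alpha_{m-1}}=\sum_{i_2,\ldots,i_m=1}^n a_{ii_2\cdots i_m}b_{i_2\alpha_1}\cdots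 b_{i_m\alpha_{m-1}}$, $i\in[n]$, $\alpha_j\in[n]^{k-1}$ (where $b_{j\alpha}$ with $\alpha=(j_2,\ldots,j_k)$ means $b_{jj_2\cdots j_k}$). Eigenvalues: for $\mathcal{A}\in\mathbb{C}^{[m,n]}$ and $x\in\mathbb{C}^n$, $(\mathcal{A}x^{m-1})_i=\sum_{i_2,\ldots,i_m=1}^n a_{ii_2\cdots i_m}x_{i_2}\cdots x_{i_m}$; $\lambda\in\mathbb{C}$ is an eigenvalue of $\mathcal{A}$ if there is a nonzero $x\in\mathbb{C}^n$ with $\mathcal{A}x^{m-1}=\lambda x^{[m-1]}$, where $x^{[m-1]}=(x_1^{m-1},\ldots,x_n^{m-1})^{\mathrm T}$. The spectral radius $\rho(\mathcal{A})$ is the maximum modulus of the eigenvalues of $\mathcal{A}$. *)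

theory Defs
  imports Complex_Main
begin

text \<open>A tensor of order p and dimension n is a function on index lists of length p
  with entries in {0..<n} (indices are 0-based: [n] is rendered as {..<n}).
  Values outside this domain are irrelevant.\<close>

definition idx :: "nat \<Rightarrow> nat \<Rightarrow> nat list set" where
  "idx p n = {xs. length xs = p \<and> set xs \<subseteq> {..<n}}"

definition nonneg_tensor :: "nat \<Rightarrow> nat \<Rightarrow> (nat list \<Rightarrow> real) \<Rightarrow> bool" where
  "nonneg_tensor p n T \<longleftrightarrow> (\<forall>l\<in>idx p n. 0 \<le> T l)"

definition row_sum :: "nat \<Rightarrow> nat \<Rightarrow> (nat list \<Rightarrow> real) \<Rightarrow> nat \<Rightarrow> real" where
  "row_sum p n T i = (\<Sum>xs\<in>idx (p - 1) n. \<bar>T (i # xs)\<bar>)"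

text \<open>General product AB of A (order m) and B (order k), of order (m-1)(k-1)+1:
  an index list i # \<alpha>_1 @ ... @ \<alpha>_{m-1} with each \<alpha>_j of length k-1.\<close>
definition gen_prod :: "nat \<Rightarrow> nat \<Rightarrow> nat \<Rightarrow> (nat list \<Rightarrow> real) \<Rightarrow> (nat list \<Rightarrow> real)
    \<Rightarrow> (nat list \<Rightarrow> real)" where
  "gen_prod m k n A B l =
     (let i = hd l; rest = tl l;
          alpha = (\<lambda>j. take (k - 1) (drop (j * (k - 1)) rest))
      in \<Sum>is\<in>idx (m - 1) n. A (i # is) * (\<Prod>j<m - 1. B ((is ! j) # alpha j)))"

definition tensor_apply :: "nat \<Rightarrow> nat \<Rightarrow> (nat list \<Rightarrow> real) \<Rightarrow> (nat \<Rightarrow> complex) \<Rightarrow> nat \<Rightarrow> complex" where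
  "tensor_apply m n A x i =
     (\<Sum>is\<in>idx (m - 1) n. complex_of_real (A (i # is)) * (\<Prod>j<m - 1. x (is ! j)))"

definition tensor_eigenvalue :: "nat \<Rightarrow> nat \<Rightarrow> (nat list \<Rightarrow> real) \<Rightarrow> complex \<Rightarrow> bool" where
  "tensor_eigenvalue m n A lam \<longleftrightarrow>
     (\<exists>x. (\<exists>i<n. x i \<noteq> 0) \<and> (\<forall>i<n. tensor_apply m n A x i = lam * x i ^ (m - 1)))"

definition tensor_spectral_radius :: "nat \<Rightarrow> nat \<Rightarrow> (nat list \<Rightarrow> real) \<Rightarrow> real" where
  "tensor_spectral_radius m n A = Sup {cmod lam | lam. tensor_eigenvalue m n A lam}"

end

theory Submission
  imports Defs "HOL-Analysis.Elementary_Metric_Spaces"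
begin

text \<open>Expanding the general product gives r_i(AB) = \<Sum> a_{i i_2 ... i_m} r_{i_2}(B) ... r_{i_m}(B),
  so both bounds are Collatz-Wielandt bounds for A weighted by the positive vector y = (r_i(B))_i.
  The upper bound holds for every eigenvalue: at an index i maximising |x_j| / y_j the eigen-equation
  forces |\<lambda>| y_i^(m-1) \<le> (A y^(m-1))_i. For the lower bound one needs a real eigenvalue that large.
  After the diagonal rescaling by y it suffices that a nonnegative tensor has a nonnegative
  eigenvector whose eigenvalue is at least its minimal row sum. For a positive tensor this
  eigenvalue is the supremum of the Collatz-Wielandt set: the supremum is attained on the compact
  simplex, and the maximiser is an eigenvector because a strict sub-eigenvector of a positive
  tensor can be improved. Nonnegative tensors follow by adding \<epsilon> > 0 to every entry and
  letting \<epsilon> \<rightarrow> 0.\<close>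

lemma finite_idx [simp]: "finite (idx p n)"
proof -
  have "idx p n = {xs. set xs \<subseteq> {..<n} \<and> length xs = p}" unfolding idx_def by auto
  then show ?thesis using finite_lists_length_eq[of "{..<n}" p] by simp
qed

lemma idx_0 [simp]: "idx 0 n = {[]}"
  unfolding idx_def by auto

lemma Cons_in_idx [simp]: "i # xs \<in> idx (Suc p) n \<longleftrightarrow> i < n \<and> xs \<in> idx p n"
  unfolding idx_def by auto

lemma idx_nth: "xs \<in> idx p n \<Longrightarrow> j < p \<Longrightarrow> xs ! j < n"
  unfolding idx_def by (auto dest!: nth_mem)

lemma replicate_in_idx: "j < n \<Longrightarrow> replicate p j \<in> idx p n"
  unfolding idx_def by auto

lemma take_drop_in_idx:
  assumes "xs \<in> idx (p * q) n" and "j < p"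
  shows "take q (drop (j * q) xs) \<in> idx q n"
proof -
  have "j * q + q \<le> p * q"
    using assms(2) by (metis add.commute mult_Suc less_eq_Suc_le mult_le_mono1)
  then show ?thesis
    using assms(1) unfolding idx_def by (auto dest: in_set_takeD in_set_dropD)
qed

lemma idx_add: "idx (q + s) n = (\<lambda>(a, r). a @ r) ` (idx q n \<times> idx s n)"
proof
  show "idx (q + s) n \<subseteq> (\<lambda>(a, r). a @ r) ` (idx q n \<times> idx s n)"
  proof
    fix xs assume "xs \<in> idx (q + s) n"
    then have "take q xs \<in> idx q n" "drop q xs \<in> idx s n"
      unfolding idx_def by (auto dest: in_set_takeD in_set_dropD)
    then show "xs \<in> (\<lambda>(a, r). a @ r) ` (idx q n \<times> idx s n)"
      by (intro image_eqI[where x = "(take q xs, drop q xs)"]) auto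
  qed
qed (auto simp: idx_def)

lemma inj_on_append_idx: "inj_on (\<lambda>(a, r). a @ r) (idx q n \<times> idx s n)"
  unfolding inj_on_def idx_def by auto

lemma sum_idx_prod_blocks:
  fixes f :: "nat \<Rightarrow> nat list \<Rightarrow> real"
  shows "(\<Sum>xs\<in>idx (p * q) n. \<Prod>j<p. f j (take q (drop (j * q) xs)))
       = (\<Prod>j<p. \<Sum>a\<in>idx q n. f j a)"
proof (induction p arbitrary: f)
  case 0
  then show ?case by simp
next
  case (Suc p)
  have "(\<Sum>xs\<in>idx (Suc p * q) n. \<Prod>j<Suc p. f j (take q (drop (j * q) xs)))
      = (\<Sum>(a, r)\<in>idx q n \<times> idx (p * q) n. \<Prod>j<Suc p. f j (take q (drop (j * q) (a @ r))))"
    unfolding mult_Suc idx_add by (subst sum.reindex[OF inj_on_append_idx]) (simp add: case_prod_unfold)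
  also have "\<dots> = (\<Sum>(a, r)\<in>idx q n \<times> idx (p * q) n.
                    f 0 a * (\<Prod>j<p. f (Suc j) (take q (drop (j * q) r))))"
  proof (intro sum.cong refl, clarify)
    fix a r assume "a \<in> idx q n"
    then have "length a = q" by (simp add: idx_def)
    then show "(\<Prod>j<Suc p. f j (take q (drop (j * q) (a @ r))))
             = f 0 a * (\<Prod>j<p. f (Suc j) (take q (drop (j * q) r)))"
      unfolding prod.lessThan_Suc_shift by simp
  qed
  also have "\<dots> = (\<Sum>a\<in>idx q n. f 0 a)
                 * (\<Sum>r\<in>idx (p * q) n. \<Prod>j<p. f (Suc j) (take q (drop (j * q) r)))"
    by (simp add: sum_product sum.cartesian_product)
  also have "\<dots> = (\<Prod>j<Suc p. \<Sum>a\<in>idx q n. f j a)"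
    using Suc.IH[of "\<lambda>j. f (Suc j)"] by (simp only: prod.lessThan_Suc_shift)
  finally show ?case .
qed

lemma nonneg_tensor_Cons:
  "nonneg_tensor (Suc p) n P \<Longrightarrow> i < n \<Longrightarrow> js \<in> idx p n \<Longrightarrow> 0 \<le> P (i # js)"
  unfolding nonneg_tensor_def by simp

definition positive_tensor :: "nat \<Rightarrow> nat \<Rightarrow> (nat list \<Rightarrow> real) \<Rightarrow> bool" where
  "positive_tensor p n T \<longleftrightarrow> (\<forall>l\<in>idx p n. 0 < T l)"

text \<open>The real form (P x^p)_i of a tensor P of order p + 1; throughout, p plays the role of m - 1.\<close>

definition tensor_form :: "nat \<Rightarrow> nat \<Rightarrow> (nat list \<Rightarrow> real) \<Rightarrow> (nat \<Rightarrow> real) \<Rightarrow> nat \<Rightarrow> real" where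
  "tensor_form p n P x i = (\<Sum>js\<in>idx p n. P (i # js) * (\<Prod>j<p. x (js ! j)))"

lemma tensor_apply_of_real:
  "tensor_apply (Suc p) n A (\<lambda>j. complex_of_real (x j)) i = complex_of_real (tensor_form p n A x i)"
  unfolding tensor_apply_def tensor_form_def by simp

lemma norm_tensor_apply_le:
  assumes "nonneg_tensor (Suc p) n A" and "i < n"
  shows "cmod (tensor_apply (Suc p) n A x i) \<le> tensor_form p n A (\<lambda>j. cmod (x j)) i"
  unfolding tensor_apply_def tensor_form_def
proof (simp, rule order_trans[OF norm_sum sum_mono])
  fix js assume "js \<in> idx p n"
  then show "cmod (complex_of_real (A (i # js)) * (\<Prod>j<p. x (js ! j)))
           \<le> A (i # js) * (\<Prod>j<p. cmod (x (js ! j)))"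
    using nonneg_tensor_Cons[OF assms] by (simp add: norm_mult prod_norm)
qed

lemma row_sum_gen_prod:
  assumes "m \<ge> 2" and "k \<ge> 1" and "nonneg_tensor m n A" and "nonneg_tensor k n B" and "i < n"
  shows "row_sum ((m - 1) * (k - 1) + 1) n (gen_prod m k n A B) i
       = tensor_form (m - 1) n A (row_sum k n B) i"
proof -
  define p where "p = m - 1"
  define q where "q = k - 1"
  have m: "m = Suc p" and k: "k = Suc q"
    using assms(1,2) by (auto simp: p_def q_def)
  have A: "\<And>is. is \<in> idx p n \<Longrightarrow> 0 \<le> A (i # is)"
    using nonneg_tensor_Cons assms(3,5) unfolding m by blast
  have B: "\<And>j a. j < n \<Longrightarrow> a \<in> idx q n \<Longrightarrow> 0 \<le> B (j # a)"
    using nonneg_tensor_Cons assms(4) unfolding k by blast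
  let ?blocks = "\<lambda>is xs. \<Prod>j<p. B ((is ! j) # take q (drop (j * q) xs))"
  have gen_prod: "gen_prod m k n A B (i # xs) = (\<Sum>is\<in>idx p n. A (i # is) * ?blocks is xs)" for xs
    unfolding gen_prod_def p_def q_def by simp
  have "row_sum ((m - 1) * (k - 1) + 1) n (gen_prod m k n A B) i
      = (\<Sum>xs\<in>idx (p * q) n. \<Sum>is\<in>idx p n. A (i # is) * ?blocks is xs)"
    unfolding row_sum_def p_def[symmetric] q_def[symmetric] diff_add_inverse2
  proof (rule sum.cong[OF refl])
    fix xs assume xs: "xs \<in> idx (p * q) n"
    show "\<bar>gen_prod m k n A B (i # xs)\<bar> = (\<Sum>is\<in>idx p n. A (i # is) * ?blocks is xs)"
      unfolding gen_prod using A B take_drop_in_idx[OF xs] idx_nth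
      by (intro abs_of_nonneg sum_nonneg mult_nonneg_nonneg prod_nonneg) auto
  qed
  also have "\<dots> = (\<Sum>is\<in>idx p n. A (i # is) * (\<Sum>xs\<in>idx (p * q) n. ?blocks is xs))"
    by (simp add: sum_distrib_left sum.swap[of _ "idx p n"])
  also have "\<dots> = tensor_form p n A (row_sum k n B) i"
    unfolding tensor_form_def sum_idx_prod_blocks[of "\<lambda>j a. B (_ ! j # a)"]
  proof (intro sum.cong refl arg_cong2[where f = "(*)"] prod.cong)
    fix js j assume "js \<in> idx p n" "j \<in> {..<p}"
    then show "(\<Sum>a\<in>idx q n. B (js ! j # a)) = row_sum k n B (js ! j)"
      unfolding row_sum_def k using B idx_nth by simp
  qed
  finally show ?thesis unfolding p_def .
qed

lemma tensor_form_cmult: "tensor_form p n P (\<lambda>j. c * x j) i = c ^ p * tensor_form p n P x i"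
  unfolding tensor_form_def by (simp add: prod.distrib sum_distrib_left mult_ac)

lemma tensor_form_mono:
  assumes "nonneg_tensor (Suc p) n P" and "i < n" and "\<And>j. j < n \<Longrightarrow> 0 \<le> x j \<and> x j \<le> y j"
  shows "tensor_form p n P x i \<le> tensor_form p n P y i"
  unfolding tensor_form_def using nonneg_tensor_Cons[OF assms(1,2)] assms(3) idx_nth
  by (intro sum_mono mult_left_mono prod_mono) (auto simp del: Cons_in_idx)

lemma tensor_form_mono_tensor:
  assumes "\<And>js. js \<in> idx p n \<Longrightarrow> P (i # js) \<le> P' (i # js)" and "\<And>j. j < n \<Longrightarrow> 0 \<le> x j"
  shows "tensor_form p n P x i \<le> tensor_form p n P' x i"
  unfolding tensor_form_def using assms idx_nth
  by (intro sum_mono mult_right_mono prod_nonneg) auto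

lemma positive_tensor_form_strict_mono:
  assumes "positive_tensor (Suc p) n P" and "p \<ge> 1" and "i < n"
    and "\<And>j. j < n \<Longrightarrow> 0 \<le> x j \<and> x j \<le> y j" and "j0 < n" and "x j0 < y j0"
  shows "tensor_form p n P x i < tensor_form p n P y i"
  unfolding tensor_form_def
proof (rule sum_strict_mono_ex1[OF finite_idx])
  have P: "\<And>js. js \<in> idx p n \<Longrightarrow> 0 < P (i # js)"
    using assms(1,3) unfolding positive_tensor_def by simp
  show "\<forall>js\<in>idx p n. P (i # js) * (\<Prod>j<p. x (js ! j)) \<le> P (i # js) * (\<Prod>j<p. y (js ! j))"
    using P assms(4) idx_nth by (intro ballI mult_left_mono prod_mono) (auto simp: less_imp_le)
  have "x j0 ^ p < y j0 ^ p"
    using assms(2,4-6) by (intro power_strict_mono) auto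
  then show "\<exists>js\<in>idx p n. P (i # js) * (\<Prod>j<p. x (js ! j)) < P (i # js) * (\<Prod>j<p. y (js ! j))"
    using P[OF replicate_in_idx[OF assms(5)]] replicate_in_idx[OF assms(5)]
    by (intro bexI[of _ "replicate p j0"]) simp_all
qed

lemma positive_tensor_form_pos:
  assumes "positive_tensor (Suc p) n P" and "p \<ge> 1" and "i < n"
    and "\<And>j. j < n \<Longrightarrow> 0 \<le> x j" and "j0 < n" and "0 < x j0"
  shows "0 < tensor_form p n P x i"
  using positive_tensor_form_strict_mono[OF assms(1-3), of "\<lambda>_. 0" x j0] assms(2,4-6)
  by (simp add: tensor_form_def zero_power)

lemma tensor_form_tendsto:
  assumes "\<And>j. j < n \<Longrightarrow> (\<lambda>k. x k j) \<longlonglongrightarrow> L j" and "\<And>l. (\<lambda>k. P k l) \<longlonglongrightarrow> Q l"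
  shows "(\<lambda>k. tensor_form p n (P k) (x k) i) \<longlonglongrightarrow> tensor_form p n Q L i"
  unfolding tensor_form_def by (intro tendsto_sum tendsto_mult tendsto_prod assms idx_nth) auto

definition in_simplex :: "nat \<Rightarrow> (nat \<Rightarrow> real) \<Rightarrow> bool" where
  "in_simplex n x \<longleftrightarrow> (\<forall>i<n. 0 \<le> x i) \<and> (\<Sum>i<n. x i) = 1"

lemma in_simplex_le_1:
  assumes "in_simplex n x" and "i < n"
  shows "x i \<le> 1"
proof -
  have "x i \<le> (\<Sum>i<n. x i)"
    using assms unfolding in_simplex_def by (intro member_le_sum) auto
  then show ?thesis
    using assms(1) unfolding in_simplex_def by simp
qed

lemma in_simplex_ex_pos:
  assumes "in_simplex n x"
  obtains j where "j < n" and "0 < x j"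
proof (rule ccontr)
  assume "\<not> thesis"
  then have "\<And>j. j < n \<Longrightarrow> x j = 0"
    using assms that unfolding in_simplex_def by force
  then show False
    using assms unfolding in_simplex_def by simp
qed

lemma in_simplex_normalize:
  assumes "\<And>i. i < n \<Longrightarrow> 0 \<le> w i" and "j < n" and "0 < w j"
  shows "in_simplex n (\<lambda>i. inverse (\<Sum>i<n. w i) * w i)"
proof -
  have "0 < (\<Sum>i<n. w i)"
    using assms by (intro sum_pos2[of _ j]) auto
  then show ?thesis
    unfolding in_simplex_def using assms(1) by (simp add: sum_distrib_left[symmetric])
qed

lemma in_simplex_limit:
  assumes "\<And>k. in_simplex n (x k)" and "\<And>i. i < n \<Longrightarrow> (\<lambda>k. x k i) \<longlonglongrightarrow> L i"
  shows "in_simplex n L"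
proof -
  have "(\<lambda>k. \<Sum>i<n. x k i) \<longlonglongrightarrow> (\<Sum>i<n. L i)"
    by (intro tendsto_sum assms(2)) simp
  then have "(\<Sum>i<n. L i) = 1"
    using assms(1) unfolding in_simplex_def by (simp add: LIMSEQ_const_iff)
  moreover have "0 \<le> L i" if "i < n" for i
    using assms that unfolding in_simplex_def by (intro LIMSEQ_le_const[OF assms(2)]) auto
  ultimately show ?thesis
    unfolding in_simplex_def by simp
qed

lemma convergent_subseq_coordinatewise:
  fixes X :: "nat \<Rightarrow> nat \<Rightarrow> real"
  assumes "\<And>k i. i < n \<Longrightarrow> \<bar>X k i\<bar> \<le> C"
  shows "\<exists>r L. strict_mono r \<and> (\<forall>i<n. (\<lambda>k. X (r k) i) \<longlonglongrightarrow> L i)"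
  using assms
proof (induction n)
  case 0
  show ?case by (rule exI[of _ id]) (auto simp: strict_mono_def)
next
  case (Suc n)
  then obtain r L where r: "strict_mono r" and L: "\<forall>i<n. (\<lambda>k. X (r k) i) \<longlonglongrightarrow> L i"
    by auto
  obtain s where s: "strict_mono s" and mono: "monoseq (\<lambda>k. X (r (s k)) n)"
    using seq_monosub[of "\<lambda>k. X (r k) n"] by auto
  have "Bseq (\<lambda>k. X (r (s k)) n)"
    using Suc.prems by (intro BseqI'[of _ C]) auto
  then obtain l where l: "(\<lambda>k. X (r (s k)) n) \<longlonglongrightarrow> l"
    using Bseq_monoseq_convergent[OF _ mono] by (auto simp: convergent_def)
  have "(\<lambda>k. X ((r \<circ> s) k) i) \<longlonglongrightarrow> (L(n := l)) i" if "i < Suc n" for i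
  proof (cases "i = n")
    case False
    then have "(\<lambda>k. X (r k) i) \<longlonglongrightarrow> L i" using L that by simp
    from LIMSEQ_subseq_LIMSEQ[OF this s] False show ?thesis by (simp add: o_def)
  qed (use l in simp)
  with strict_mono_o[OF r s] show ?case
    by blast
qed

lemma simplex_convergent_subseq:
  fixes \<mu> :: "nat \<Rightarrow> real"
  assumes "\<And>k. in_simplex n (x k)" and "Bseq \<mu>"
  obtains r L \<nu> where "strict_mono r" and "in_simplex n L"
    and "\<And>i. i < n \<Longrightarrow> (\<lambda>k. x (r k) i) \<longlonglongrightarrow> L i" and "(\<lambda>k. \<mu> (r k)) \<longlonglongrightarrow> \<nu>"
proof -
  obtain C where C: "\<And>k. \<bar>\<mu> k\<bar> \<le> C"
    using assms(2) by (metis BseqE real_norm_def)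
  \<comment> \<open>the scalar sequence is carried along as the extra coordinate n\<close>
  define Y where "Y k = (x k)(n := \<mu> k)" for k
  have "\<bar>Y k i\<bar> \<le> C + 1" if "i < Suc n" for k i
  proof (cases "i = n")
    case False
    then show ?thesis
      using C[of k] assms(1)[of k] in_simplex_le_1[of n "x k" i] that
      unfolding Y_def in_simplex_def by auto
  qed (use C[of k] in \<open>auto simp: Y_def\<close>)
  then obtain r L where r: "strict_mono r" and L: "\<forall>i<Suc n. (\<lambda>k. Y (r k) i) \<longlonglongrightarrow> L i"
    using convergent_subseq_coordinatewise[of "Suc n" Y] by blast
  have "(\<lambda>k. x (r k) i) \<longlonglongrightarrow> L i" if "i < n" for i
    using L that unfolding Y_def by (simp add: less_Suc_eq)
  moreover have "(\<lambda>k. \<mu> (r k)) \<longlonglongrightarrow> L n"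
    using L[rule_format, of n] unfolding Y_def by simp
  ultimately show ?thesis
    using that r in_simplex_limit[OF assms(1)] by blast
qed

lemma subeigenvector_weighted_row_sum_bound:
  assumes "nonneg_tensor (Suc p) n P" and "\<And>j. j < n \<Longrightarrow> 0 \<le> x j" and "j1 < n" and "0 < x j1"
    and "\<And>j. j < n \<Longrightarrow> 0 < y j" and "\<And>i. i < n \<Longrightarrow> \<mu> * x i ^ p \<le> tensor_form p n P x i"
  obtains i where "i < n" and "\<mu> * y i ^ p \<le> tensor_form p n P y i"
proof -
  define z where "z j = x j / y j" for j
  have "Max (z ` {..<n}) \<in> z ` {..<n}"
    using assms(3) by (intro Max_in) auto
  then obtain i where i: "i < n" and "z i = Max (z ` {..<n})"
    by auto
  then have z_max: "\<And>j. j < n \<Longrightarrow> z j \<le> z i"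
    by simp
  have "0 < z i"
    using z_max[OF assms(3)] assms(3-5) unfolding z_def by (meson divide_pos_pos order_less_le_trans)
  have "z i ^ p * (\<mu> * y i ^ p) = \<mu> * x i ^ p"
    using assms(5)[OF i] by (simp add: z_def power_divide)
  also have "\<dots> \<le> tensor_form p n P x i"
    using assms(6)[OF i] .
  also have "\<dots> \<le> tensor_form p n P (\<lambda>j. z i * y j) i"
  proof (rule tensor_form_mono[OF assms(1) i])
    fix j assume j: "j < n"
    have "x j = z j * y j"
      using assms(5)[OF j] by (simp add: z_def)
    then show "0 \<le> x j \<and> x j \<le> z i * y j"
      using assms(2,5)[OF j] z_max[OF j] by (simp add: mult_right_mono)
  qed
  also have "\<dots> = z i ^ p * tensor_form p n P y i"
    by (rule tensor_form_cmult)
  finally show ?thesis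
    using that i \<open>0 < z i\<close> by (simp add: mult_le_cancel_left_pos)
qed

lemma eigenvalue_weighted_row_sum_bound:
  assumes "nonneg_tensor (Suc p) n A" and "\<And>j. j < n \<Longrightarrow> 0 < y j"
    and "tensor_eigenvalue (Suc p) n A lam"
  obtains i where "i < n" and "cmod lam * y i ^ p \<le> tensor_form p n A y i"
proof -
  obtain x j1 where "j1 < n" "x j1 \<noteq> 0"
    and eig: "\<And>i. i < n \<Longrightarrow> tensor_apply (Suc p) n A x i = lam * x i ^ p"
    using assms(3) unfolding tensor_eigenvalue_def by auto
  have "cmod lam * cmod (x i) ^ p \<le> tensor_form p n A (\<lambda>j. cmod (x j)) i" if "i < n" for i
    using norm_tensor_apply_le[OF assms(1) that, of x] eig[OF that]
    by (simp add: norm_mult norm_power)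
  with \<open>j1 < n\<close> \<open>x j1 \<noteq> 0\<close> show ?thesis
    using subeigenvector_weighted_row_sum_bound[OF assms(1), of "\<lambda>j. cmod (x j)" j1 y] assms(2) that
    by auto
qed

definition collatz_wielandt_set :: "nat \<Rightarrow> nat \<Rightarrow> (nat list \<Rightarrow> real) \<Rightarrow> real set" where
  "collatz_wielandt_set p n P =
     {\<mu>. \<exists>x. in_simplex n x \<and> (\<forall>i<n. \<mu> * x i ^ p \<le> tensor_form p n P x i)}"

lemma collatz_wielandt_setI:
  assumes "\<And>i. i < n \<Longrightarrow> 0 \<le> w i" and "j < n" and "0 < w j"
    and "\<And>i. i < n \<Longrightarrow> \<mu> * w i ^ p \<le> tensor_form p n P w i"
  shows "\<mu> \<in> collatz_wielandt_set p n P"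
proof -
  define c where "c = inverse (\<Sum>i<n. w i)"
  have "0 \<le> c"
    unfolding c_def using assms(1) by (intro inverse_nonnegative_iff_nonnegative[THEN iffD2] sum_nonneg) simp
  show ?thesis
    unfolding collatz_wielandt_set_def
  proof (intro CollectI exI conjI allI impI)
    show "in_simplex n (\<lambda>i. c * w i)"
      unfolding c_def by (rule in_simplex_normalize[of n w, OF assms(1-3)])
    fix i assume i: "i < n"
    have "\<mu> * (c * w i) ^ p = c ^ p * (\<mu> * w i ^ p)"
      by (simp add: power_mult_distrib)
    also have "\<dots> \<le> c ^ p * tensor_form p n P w i"
      using assms(4)[OF i] \<open>0 \<le> c\<close> by (simp add: mult_left_mono)
    also have "\<dots> = tensor_form p n P (\<lambda>j. c * w j) i"
      by (rule tensor_form_cmult[symmetric])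
    finally show "\<mu> * (c * w i) ^ p \<le> tensor_form p n P (\<lambda>j. c * w j) i" .
  qed
qed

lemma min_row_sum_in_collatz_wielandt_set:
  assumes "n \<ge> 1"
  shows "Min ((\<lambda>i. tensor_form p n P (\<lambda>_. 1) i) ` {..<n}) \<in> collatz_wielandt_set p n P"
  by (rule collatz_wielandt_setI[of n "\<lambda>_. 1" 0]) (use assms in auto)

lemma collatz_wielandt_set_le_max_row_sum:
  assumes "nonneg_tensor (Suc p) n P" and "\<mu> \<in> collatz_wielandt_set p n P"
  shows "\<mu> \<le> Max ((\<lambda>i. tensor_form p n P (\<lambda>_. 1) i) ` {..<n})"
proof -
  obtain x where x: "in_simplex n x" and sub: "\<And>i. i < n \<Longrightarrow> \<mu> * x i ^ p \<le> tensor_form p n P x i"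
    using assms(2) unfolding collatz_wielandt_set_def by blast
  obtain j where "j < n" and "0 < x j"
    using in_simplex_ex_pos[OF x] .
  then obtain i where "i < n" and "\<mu> \<le> tensor_form p n P (\<lambda>_. 1) i"
    using subeigenvector_weighted_row_sum_bound[OF assms(1), of x j "\<lambda>_. 1" \<mu>] x sub
    unfolding in_simplex_def by auto
  then show ?thesis
    by (auto intro: order_trans[OF _ Max_ge])
qed

lemma collatz_wielandt_set_improve:
  assumes P: "positive_tensor (Suc p) n P" and p: "p \<ge> 1" and "0 < \<mu>" and L: "in_simplex n L"
    and sub: "\<And>i. i < n \<Longrightarrow> \<mu> * L i ^ p \<le> tensor_form p n P L i"
    and "i0 < n" and strict: "\<mu> * L i0 ^ p < tensor_form p n P L i0"
  obtains \<mu>' where "\<mu> < \<mu>'" and "\<mu>' \<in> collatz_wielandt_set p n P"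
proof -
  \<comment> \<open>w = (P L^p)^(1/p) dominates \<mu>^(1/p) L, strictly at i0; positivity of P makes
     \<mu> w^p < P w^p strict in every row\<close>
  define w where "w i = root p (tensor_form p n P L i)" for i
  define a where "a = root p \<mu>"
  have L0: "\<And>j. j < n \<Longrightarrow> 0 \<le> L j"
    using L unfolding in_simplex_def by simp
  obtain j0 where j0: "j0 < n" "0 < L j0"
    using in_simplex_ex_pos[OF L] .
  have PL_pos: "\<And>i. i < n \<Longrightarrow> 0 < tensor_form p n P L i"
    using positive_tensor_form_pos[OF P p, of _ L j0] L0 j0 by blast
  have w_pos: "\<And>i. i < n \<Longrightarrow> 0 < w i"
    unfolding w_def using PL_pos p by simp
  have aL: "a * L j = root p (\<mu> * L j ^ p)" if "j < n" for j
    unfolding a_def real_root_mult using L0[OF that] p by (simp add: real_root_power_cancel)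
  have aL_le: "0 \<le> a * L j \<and> a * L j \<le> w j" if "j < n" for j
    using L0[OF that] sub[OF that] p \<open>0 < \<mu>\<close>
    unfolding aL[OF that] w_def by (auto intro: real_root_le_mono)
  have aL_less: "a * L i0 < w i0"
    unfolding aL[OF \<open>i0 < n\<close>] w_def using strict p by (auto intro: real_root_less_mono)
  have w_strict: "\<mu> * w i ^ p < tensor_form p n P w i" if i: "i < n" for i
  proof -
    have "\<mu> * w i ^ p = a ^ p * tensor_form p n P L i"
      unfolding w_def a_def using PL_pos[OF i] \<open>0 < \<mu>\<close> p by simp
    also have "\<dots> = tensor_form p n P (\<lambda>j. a * L j) i"
      by (rule tensor_form_cmult[symmetric])
    also have "\<dots> < tensor_form p n P w i"
      using positive_tensor_form_strict_mono[OF P p i, of "\<lambda>j. a * L j" w i0] aL_le aL_less \<open>i0 < n\<close>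
      by blast
    finally show ?thesis .
  qed
  define \<mu>' where "\<mu>' = Min ((\<lambda>i. tensor_form p n P w i / w i ^ p) ` {..<n})"
  have "\<mu> < \<mu>'"
  proof -
    have "{..<n} \<noteq> {}"
      using \<open>i0 < n\<close> by auto
    then show ?thesis
      unfolding \<mu>'_def using w_strict w_pos by (simp add: pos_less_divide_eq)
  qed
  moreover have "\<mu>' \<in> collatz_wielandt_set p n P"
  proof (rule collatz_wielandt_setI[of n w j0])
    fix i assume i: "i < n"
    have "\<mu>' \<le> tensor_form p n P w i / w i ^ p"
      unfolding \<mu>'_def using i by simp
    then show "\<mu>' * w i ^ p \<le> tensor_form p n P w i"
      using w_pos[OF i] by (simp add: pos_le_divide_eq)
  qed (use w_pos j0 in \<open>auto intro: less_imp_le\<close>)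
  ultimately show ?thesis
    using that by blast
qed

lemma positive_tensor_eigenpair:
  assumes P: "positive_tensor (Suc p) n P" and p: "p \<ge> 1" and n: "n \<ge> 1"
  obtains lam x where "in_simplex n x" and "\<And>i. i < n \<Longrightarrow> tensor_form p n P x i = lam * x i ^ p"
    and "Min ((\<lambda>i. tensor_form p n P (\<lambda>_. 1) i) ` {..<n}) \<le> lam"
proof -
  let ?F = "collatz_wielandt_set p n P"
  let ?r0 = "Min ((\<lambda>i. tensor_form p n P (\<lambda>_. 1) i) ` {..<n})"
  have "nonneg_tensor (Suc p) n P"
    using P unfolding positive_tensor_def nonneg_tensor_def by (simp add: less_imp_le)
  then have bdd: "bdd_above ?F"
    by (meson bdd_aboveI collatz_wielandt_set_le_max_row_sum)
  have r0: "?r0 \<in> ?F"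
    using min_row_sum_in_collatz_wielandt_set[OF n] .
  define ms where "ms = Sup ?F"
  have le_ms: "\<And>\<mu>. \<mu> \<in> ?F \<Longrightarrow> \<mu> \<le> ms"
    unfolding ms_def using bdd by (simp add: cSup_upper)
  have "0 < ?r0"
    using n positive_tensor_form_pos[OF P p, of _ "\<lambda>_. 1" 0] by (simp add: lessThan_empty_iff)
  then have ms_pos: "0 < ms"
    using le_ms[OF r0] by linarith
  have "ms \<in> closure ?F"
    unfolding ms_def using r0 bdd by (intro closure_contains_Sup) auto
  then obtain \<mu> where \<mu>: "\<And>k. \<mu> k \<in> ?F" and \<mu>_lim: "\<mu> \<longlonglongrightarrow> ms"
    unfolding closure_sequential by blast
  then have "\<forall>k. \<exists>x. in_simplex n x \<and> (\<forall>i<n. \<mu> k * x i ^ p \<le> tensor_form p n P x i)"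
    unfolding collatz_wielandt_set_def by blast
  then obtain x where "\<forall>k. in_simplex n (x k) \<and> (\<forall>i<n. \<mu> k * x k i ^ p \<le> tensor_form p n P (x k) i)"
    by (rule choice[THEN exE])
  then have x: "\<And>k. in_simplex n (x k)"
    and x_sub: "\<And>k i. i < n \<Longrightarrow> \<mu> k * x k i ^ p \<le> tensor_form p n P (x k) i"
    by auto
  have "Bseq \<mu>"
    using \<mu>_lim by (intro convergent_imp_Bseq convergentI)
  then obtain r L \<nu> where r: "strict_mono r" and L: "in_simplex n L"
    and x_lim: "\<And>i. i < n \<Longrightarrow> (\<lambda>k. x (r k) i) \<longlonglongrightarrow> L i" and "(\<lambda>k. \<mu> (r k)) \<longlonglongrightarrow> \<nu>"
    using simplex_convergent_subseq[of n x] x by blast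
  have \<mu>r_lim: "(\<lambda>k. \<mu> (r k)) \<longlonglongrightarrow> ms"
    using LIMSEQ_subseq_LIMSEQ[OF \<mu>_lim r] by (simp add: o_def)
  have L_sub: "ms * L i ^ p \<le> tensor_form p n P L i" if "i < n" for i
  proof (rule LIMSEQ_le)
    show "(\<lambda>k. \<mu> (r k) * x (r k) i ^ p) \<longlonglongrightarrow> ms * L i ^ p"
      by (intro tendsto_mult tendsto_power \<mu>r_lim x_lim that)
    show "(\<lambda>k. tensor_form p n P (x (r k)) i) \<longlonglongrightarrow> tensor_form p n P L i"
      by (rule tensor_form_tendsto) (auto intro: x_lim)
  qed (use x_sub that in blast)
  have "tensor_form p n P L i = ms * L i ^ p" if i: "i < n" for i
  proof (rule ccontr)
    assume "tensor_form p n P L i \<noteq> ms * L i ^ p"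
    with L_sub[OF i] have "ms * L i ^ p < tensor_form p n P L i"
      by simp
    then obtain \<mu>' where "ms < \<mu>'" "\<mu>' \<in> ?F"
      using collatz_wielandt_set_improve[OF P p ms_pos L L_sub i] by blast
    with le_ms show False
      by fastforce
  qed
  then show ?thesis
    using that L le_ms[OF r0] by blast
qed

lemma eigenpair_limit:
  assumes x: "\<And>k. in_simplex n (x k)" and "Bseq lam" and P_lim: "\<And>l. (\<lambda>k. P k l) \<longlonglongrightarrow> Q l"
    and eig: "\<And>k i. i < n \<Longrightarrow> tensor_form p n (P k) (x k) i = lam k * x k i ^ p"
    and lower: "\<And>k. c \<le> lam k"
  obtains \<nu> L where "in_simplex n L" and "\<And>i. i < n \<Longrightarrow> tensor_form p n Q L i = \<nu> * L i ^ p"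
    and "c \<le> \<nu>"
proof -
  obtain r L \<nu> where r: "strict_mono r" and L: "in_simplex n L"
    and x_lim: "\<And>i. i < n \<Longrightarrow> (\<lambda>k. x (r k) i) \<longlonglongrightarrow> L i" and lam_lim: "(\<lambda>k. lam (r k)) \<longlonglongrightarrow> \<nu>"
    using simplex_convergent_subseq[of n x] x \<open>Bseq lam\<close> by blast
  have Pr_lim: "(\<lambda>k. P (r k) l) \<longlonglongrightarrow> Q l" for l
    using LIMSEQ_subseq_LIMSEQ[OF P_lim r] by (simp add: o_def)
  have "tensor_form p n Q L i = \<nu> * L i ^ p" if "i < n" for i
  proof (rule LIMSEQ_unique)
    show "(\<lambda>k. tensor_form p n (P (r k)) (x (r k)) i) \<longlonglongrightarrow> tensor_form p n Q L i"
      using tensor_form_tendsto[OF x_lim Pr_lim] .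
    show "(\<lambda>k. tensor_form p n (P (r k)) (x (r k)) i) \<longlonglongrightarrow> \<nu> * L i ^ p"
      unfolding eig[OF that] by (intro tendsto_mult tendsto_power lam_lim x_lim that)
  qed
  moreover have "c \<le> \<nu>"
    using lam_lim lower by (intro LIMSEQ_le_const) auto
  ultimately show ?thesis
    using that L by blast
qed

lemma nonneg_tensor_eigenpair:
  assumes Q: "nonneg_tensor (Suc p) n Q" and p: "p \<ge> 1" and n: "n \<ge> 1"
  obtains lam x where "in_simplex n x" and "\<And>i. i < n \<Longrightarrow> tensor_form p n Q x i = lam * x i ^ p"
    and "Min ((\<lambda>i. tensor_form p n Q (\<lambda>_. 1) i) ` {..<n}) \<le> lam"
proof -
  define \<epsilon> where "\<epsilon> k = inverse (real (Suc k))" for k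
  define P where "P k l = Q l + \<epsilon> k" for k l
  let ?rs = "\<lambda>T i. tensor_form p n T (\<lambda>_. 1) i"
  have "positive_tensor (Suc p) n (P k)" for k
    using Q unfolding nonneg_tensor_def positive_tensor_def P_def \<epsilon>_def
    by (simp add: add_nonneg_pos)
  then have "\<forall>k. \<exists>lam x. in_simplex n x \<and> (\<forall>i<n. tensor_form p n (P k) x i = lam * x i ^ p)
                 \<and> Min (?rs (P k) ` {..<n}) \<le> lam"
    using positive_tensor_eigenpair[OF _ p n] by metis
  then obtain lam x where x: "\<And>k. in_simplex n (x k)"
    and eig: "\<And>k i. i < n \<Longrightarrow> tensor_form p n (P k) (x k) i = lam k * x k i ^ p"
    and lam_ge: "\<And>k. Min (?rs (P k) ` {..<n}) \<le> lam k"
    by metis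
  have nne: "{..<n} \<noteq> {}"
    using n by (simp add: lessThan_empty_iff)
  have \<epsilon>_le: "0 < \<epsilon> k \<and> \<epsilon> k \<le> 1" for k
    unfolding \<epsilon>_def by (simp add: inverse_le_1_iff)
  have lower: "Min (?rs Q ` {..<n}) \<le> lam k" for k
  proof -
    have "Min (?rs Q ` {..<n}) \<le> Min (?rs (P k) ` {..<n})"
      using nne \<epsilon>_le[of k] unfolding P_def
      by (auto intro!: Min.boundedI order_trans[OF Min_le tensor_form_mono_tensor])
    then show ?thesis
      using lam_ge[of k] by linarith
  qed
  have upper: "lam k \<le> Max (?rs (\<lambda>l. Q l + 1) ` {..<n})" for k
  proof -
    have "nonneg_tensor (Suc p) n (P k)"
      using Q \<epsilon>_le[of k] unfolding nonneg_tensor_def P_def by (simp add: less_imp_le)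
    moreover have "lam k \<in> collatz_wielandt_set p n (P k)"
      unfolding collatz_wielandt_set_def using x eig by (auto intro!: exI[of _ "x k"])
    ultimately have "lam k \<le> Max (?rs (P k) ` {..<n})"
      by (rule collatz_wielandt_set_le_max_row_sum)
    also have "\<dots> \<le> Max (?rs (\<lambda>l. Q l + 1) ` {..<n})"
    proof (rule Max.boundedI)
      fix a assume "a \<in> ?rs (P k) ` {..<n}"
      then obtain i where "i < n" and "a = ?rs (P k) i"
        by blast
      moreover have "?rs (P k) i \<le> ?rs (\<lambda>l. Q l + 1) i"
        using \<epsilon>_le[of k] unfolding P_def by (intro tensor_form_mono_tensor) auto
      ultimately show "a \<le> Max (?rs (\<lambda>l. Q l + 1) ` {..<n})"
        by (auto intro: order_trans[OF _ Max_ge])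
    qed (use nne in auto)
    finally show ?thesis .
  qed
  have bounded: "Bseq lam"
  proof (rule BseqI')
    fix k
    show "norm (lam k) \<le> \<bar>Min (?rs Q ` {..<n})\<bar> + \<bar>Max (?rs (\<lambda>l. Q l + 1) ` {..<n})\<bar>"
      using lower[of k] upper[of k] unfolding real_norm_def by linarith
  qed
  have P_lim: "(\<lambda>k. P k l) \<longlonglongrightarrow> Q l" for l
    unfolding P_def \<epsilon>_def using tendsto_add[OF tendsto_const LIMSEQ_inverse_real_of_nat] by simp
  show ?thesis
    using eigenpair_limit[of n x lam P Q p, OF x bounded P_lim eig lower] that by blast
qed

lemma eigenvalue_ge_min_weighted_row_sum:
  assumes A: "nonneg_tensor (Suc p) n A" and p: "p \<ge> 1" and n: "n \<ge> 1"
    and y: "\<And>j. j < n \<Longrightarrow> 0 < y j"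
  obtains lam where "tensor_eigenvalue (Suc p) n A (complex_of_real lam)"
    and "Min ((\<lambda>i. tensor_form p n A y i / y i ^ p) ` {..<n}) \<le> lam"
proof -
  \<comment> \<open>the rescaled tensor diag(y)^(-p) A diag(y): its row sums are the weighted row sums of A\<close>
  define Q where "Q l = A l * (\<Prod>j<p. y (tl l ! j)) / y (hd l) ^ p" for l
  have Q_form: "tensor_form p n Q x i = tensor_form p n A (\<lambda>j. y j * x j) i / y i ^ p" for x i
    unfolding tensor_form_def Q_def by (simp add: sum_divide_distrib prod.distrib mult_ac)
  have "nonneg_tensor (Suc p) n Q"
    unfolding nonneg_tensor_def
  proof
    fix l assume "l \<in> idx (Suc p) n"
    then obtain i js where l: "l = i # js" and "i < n" and js: "js \<in> idx p n"
      by (cases l) (auto simp: idx_def)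
    have "0 \<le> (\<Prod>j<p. y (js ! j))"
      using y idx_nth[OF js] by (intro prod_nonneg) (simp add: less_imp_le)
    then show "0 \<le> Q l"
      unfolding Q_def l using nonneg_tensor_Cons[OF A \<open>i < n\<close> js] y[OF \<open>i < n\<close>] by simp
  qed
  then obtain lam x where x: "in_simplex n x" and eig: "\<And>i. i < n \<Longrightarrow> tensor_form p n Q x i = lam * x i ^ p"
    and lam: "Min ((\<lambda>i. tensor_form p n Q (\<lambda>_. 1) i) ` {..<n}) \<le> lam"
    using nonneg_tensor_eigenpair[OF _ p n] by blast
  define z where "z j = y j * x j" for j
  have "tensor_eigenvalue (Suc p) n A (complex_of_real lam)"
    unfolding tensor_eigenvalue_def
  proof (intro exI[of _ "\<lambda>j. complex_of_real (z j)"] conjI allI impI)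
    obtain j where "j < n" and "0 < x j"
      using in_simplex_ex_pos[OF x] .
    then show "\<exists>j<n. complex_of_real (z j) \<noteq> 0"
      using y unfolding z_def by force
    fix i assume i: "i < n"
    have "tensor_form p n A z i = tensor_form p n Q x i * y i ^ p"
      using Q_form[of x i] y[OF i] unfolding z_def by simp
    also have "\<dots> = lam * z i ^ p"
      unfolding eig[OF i] z_def by (simp add: power_mult_distrib)
    finally show "tensor_apply (Suc p) n A (\<lambda>j. complex_of_real (z j)) i
        = complex_of_real lam * complex_of_real (z i) ^ (Suc p - 1)"
      by (simp add: tensor_apply_of_real)
  qed
  moreover have "(\<lambda>i. tensor_form p n Q (\<lambda>_. 1) i) ` {..<n} = (\<lambda>i. tensor_form p n A y i / y i ^ p) ` {..<n}"
    by (simp add: Q_form)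
  ultimately show ?thesis
    using that lam by simp
qed

theorem theorem3p1:
  fixes m k n :: nat and A B :: "nat list \<Rightarrow> real"
  assumes "m \<ge> 2" and "k \<ge> 1" and "n \<ge> 1"
    and "nonneg_tensor m n A" and "nonneg_tensor k n B"
    and "\<forall>i<n. row_sum k n B i \<noteq> 0"
  shows "Min ((\<lambda>i. row_sum ((m - 1) * (k - 1) + 1) n (gen_prod m k n A B) i
                   / (row_sum k n B i) ^ (m - 1)) ` {..<n})
           \<le> tensor_spectral_radius m n A \<and>
         tensor_spectral_radius m n A
           \<le> Max ((\<lambda>i. row_sum ((m - 1) * (k - 1) + 1) n (gen_prod m k n A B) i
                   / (row_sum k n B i) ^ (m - 1)) ` {..<n})"
proof -
  define p where "p = m - 1"
  have m: "m = Suc p" and p: "p \<ge> 1"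
    using assms(1) by (auto simp: p_def)
  let ?y = "row_sum k n B"
  let ?c = "\<lambda>i. tensor_form p n A ?y i / ?y i ^ p"
  let ?S = "{cmod lam | lam. tensor_eigenvalue m n A lam}"
  have y: "\<And>i. i < n \<Longrightarrow> 0 < ?y i"
    using assms(6) unfolding row_sum_def by (metis abs_ge_zero order_le_less sum_nonneg)
  have weighted: "(\<lambda>i. row_sum ((m - 1) * (k - 1) + 1) n (gen_prod m k n A B) i / ?y i ^ (m - 1)) ` {..<n}
      = ?c ` {..<n}"
    using row_sum_gen_prod[OF assms(1,2,4,5)] by (simp add: p_def)
  have upper: "s \<le> Max (?c ` {..<n})" if "s \<in> ?S" for s
  proof -
    obtain lam where s: "s = cmod lam" and "tensor_eigenvalue (Suc p) n A lam"
      using \<open>s \<in> ?S\<close> m by blast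
    then obtain i where i: "i < n" and "cmod lam * ?y i ^ p \<le> tensor_form p n A ?y i"
      using eigenvalue_weighted_row_sum_bound assms(4) y unfolding m by blast
    then have "s \<le> ?c i"
      using y[OF i] s by (simp add: pos_le_divide_eq)
    also have "\<dots> \<le> Max (?c ` {..<n})"
      using i by simp
    finally show ?thesis .
  qed
  obtain lam where "tensor_eigenvalue (Suc p) n A (complex_of_real lam)" and lam: "Min (?c ` {..<n}) \<le> lam"
    using eigenvalue_ge_min_weighted_row_sum assms(3,4) p y unfolding m by blast
  then have lam_S: "\<bar>lam\<bar> \<in> ?S"
    unfolding m by force
  have "bdd_above ?S"
    using upper by (rule bdd_aboveI)
  then have "Min (?c ` {..<n}) \<le> Sup ?S"
    using lam cSup_upper[OF lam_S] by linarith
  moreover have "Sup ?S \<le> Max (?c ` {..<n})"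
    using lam_S upper by (intro cSup_least) auto
  ultimately show ?thesis
    unfolding weighted tensor_spectral_radius_def by blast
qed

end
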